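(* Let $G$, $\widehat{D}$, $\mathcal{C}$, $\mathbf{H}_d$, $\mathcal{P}$, $\boldsymbol{\xi}_N$ be as in the context. If $\widehat{D}$ is chainable and locally linear, then $\boldsymbol{\xi}_N(\mathbf{H})\neq\mathbf{0}$ for every $\mathbf{H}\in G$ with $\mathbf{H}\notin\mathcal{C}\cup\mathcal{P}$.
   Context: $G$ is a connected matrix Lie group of $n\times n$ real matrices, dimension $m$, Lie algebra $\mathfrak{g}$ with fixed basis $\mathbf{E}_1,\dots,\mathbf{E}_m$, $S(\boldsymbol{\zeta})=\sum_k\zeta_k\mathbf{E}_k$. For $f:G\times G\to\mathbb{R}$, $\mathrm{L}_{\mathbf{V}}[f](\mathbf{V},\mathbf{W})\in\mathbb{R}^{1\times m}$ has $j$-th entry $\lim_{\epsilon\to0}\frac1\epsilon(f(\exp(S(\mathbf{e}_j)\epsilon)\mathbf{V},\mathbf{W})-f(\mathbf{V},\mathbf{W}))$, and $\mathrm{L}_{\mathbf{W}}[f]$ analogously; differentiability at a point means these limits exist and are continuous there. An EE-distance function is $\widehat{D}:G\times G\to\mathbb{R}_+$ with: (a) $\widehat{D}\ge0$, $=0$ iff $\mathbf{V}=\mathbf{W}$; (b) differentiable in both arguments almost everywhere, with some $D_{\min,\mathcal{C}}>0$ such that the derivatives exist whenever $0<\widehat{D}<D_{\min,\mathcal{C}}$, and where a partial derivative does not exist all its directional limits exist and are bounded. A path generating function is $\Phi:[0,1]\times G\times G\to G$, differentiable in $\sigma$, with $\Phi(0,\mathbf{V},\mathbf{W})=\mathbf{V}$,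 $\Phi(1,\mathbf{V},\mathbf{W})=\mathbf{W}$. $\widehat{D}$ is chainable if it is an EE-distance and some path generating function $\Phi$ satisfies $\widehat{D}(\mathbf{V},\mathbf{W})=\widehat{D}(\mathbf{V},\Phi(\sigma,\mathbf{V},\mathbf{W}))+\widehat{D}(\Phi(\sigma,\mathbf{V},\mathbf{W}),\mathbf{W})$ for all $\mathbf{V},\mathbf{W}\in G$, $\sigma\in[0,1]$; it is locally linear if moreover $\lim_{\sigma\to0^+}\frac1\sigma\widehat{D}(\mathbf{A},\Phi(\sigma,\mathbf{A},\mathbf{B}))>0$ for all $\mathbf{A}\neq\mathbf{B}$. $\mathcal{C}$ is the image of a differentiable $\mathbf{H}_d:[0,1]\to G$ without self-intersections. $D(\mathbf{H})\triangleq\min_{s\in[0,1]}\widehat{D}(\mathbf{H},\mathbf{H}_d(s))$. $\mathcal{P}_1$: points where the minimizer is not unique; for $\mathbf{H}\notin\mathcal{P}_1$, $s^*=s^*(\mathbf{H})$ is the unique minimizer. $\mathcal{P}_2$: points $\mathbf{H}\notin\mathcal{P}_1\cup\mathcal{C}$ with $(\mathbf{H},\mathbf{H}_d(s^* ))$ a non-differentiability point of $\widehat{D}$. $\mathcal{P}=\mathcal{P}_1\cup\mathcal{P}_2$. For $\mathbf{H}\notin\mathcal{C}\cup\mathcal{P}$, $\boldsymbol{\xi}_N(\mathbf{H})\triangleq-\mathrm{L}_{\mathbf{V}}[\widehat{D}](\mathbf{H},\mathbf{H}_d(s^* ))^\top$. *)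

theory Defs
  imports "HOL-Analysis.Analysis"
begin

definition matpow :: "real^'n^'n \<Rightarrow> nat \<Rightarrow> real^'n^'n" where
  "matpow A k = (((\<lambda>B. A ** B) ^^ k) (mat 1))"

definition mexp :: "real^'n^'n \<Rightarrow> real^'n^'n" where
  "mexp A = (\<Sum>k. (1 / fact k) *\<^sub>R matpow A k)"

definition matrix_lie_group :: "(real^'n^'n) set \<Rightarrow> bool" where
  "matrix_lie_group G \<longleftrightarrow>
     G \<subseteq> {A. invertible A} \<and> mat 1 \<in> G \<and>
     (\<forall>A\<in>G. \<forall>B\<in>G. A ** B \<in> G) \<and> (\<forall>A\<in>G. matrix_inv A \<in> G) \<and>
     closedin (top_of_set {A. invertible A}) G"

definition lie_algebra :: "(real^'n^'n) set \<Rightarrow> (real^'n^'n) set" where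
  "lie_algebra G = {X. \<forall>t::real. mexp (t *\<^sub>R X) \<in> G}"

text \<open>E indexes a basis E_1..E_m of the Lie algebra by the finite type 'm, so m = CARD('m).\<close>
definition lie_basis :: "(real^'n^'n) set \<Rightarrow> ('m::finite \<Rightarrow> real^'n^'n) \<Rightarrow> bool" where
  "lie_basis G E \<longleftrightarrow> inj E \<and> independent (range E) \<and> span (range E) = lie_algebra G"

definition Salg :: "('m::finite \<Rightarrow> real^'n^'n) \<Rightarrow> real^'m \<Rightarrow> real^'n^'n" where
  "Salg E \<zeta> = (\<Sum>k\<in>UNIV. (\<zeta> $ k) *\<^sub>R E k)"

definition qV :: "('m::finite \<Rightarrow> real^'n^'n) \<Rightarrow> (real^'n^'n \<Rightarrow> real^'n^'n \<Rightarrow> real)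
                   \<Rightarrow> real^'n^'n \<Rightarrow> real^'n^'n \<Rightarrow> real^'m \<Rightarrow> real \<Rightarrow> real" where
  "qV E f V W \<zeta> \<epsilon> = (f (mexp (\<epsilon> *\<^sub>R Salg E \<zeta>) ** V) W - f V W) / \<epsilon>"

definition qW :: "('m::finite \<Rightarrow> real^'n^'n) \<Rightarrow> (real^'n^'n \<Rightarrow> real^'n^'n \<Rightarrow> real)
                   \<Rightarrow> real^'n^'n \<Rightarrow> real^'n^'n \<Rightarrow> real^'m \<Rightarrow> real \<Rightarrow> real" where
  "qW E f V W \<zeta> \<epsilon> = (f V (mexp (\<epsilon> *\<^sub>R Salg E \<zeta>) ** W) - f V W) / \<epsilon>"

text \<open>The row vector L_V[f](V,W) (as an element of R^m); j-th entry uses S(e_j).\<close>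
definition LV :: "('m::finite \<Rightarrow> real^'n^'n) \<Rightarrow> (real^'n^'n \<Rightarrow> real^'n^'n \<Rightarrow> real)
                   \<Rightarrow> real^'n^'n \<Rightarrow> real^'n^'n \<Rightarrow> real^'m" where
  "LV E f V W = (\<chi> j. Lim (at 0) (qV E f V W (axis j 1)))"

definition LW :: "('m::finite \<Rightarrow> real^'n^'n) \<Rightarrow> (real^'n^'n \<Rightarrow> real^'n^'n \<Rightarrow> real)
                   \<Rightarrow> real^'n^'n \<Rightarrow> real^'n^'n \<Rightarrow> real^'m" where
  "LW E f V W = (\<chi> j. Lim (at 0) (qW E f V W (axis j 1)))"

definition has_LV :: "('m::finite \<Rightarrow> real^'n^'n) \<Rightarrow> (real^'n^'n \<Rightarrow> real^'n^'n \<Rightarrow> real)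
                   \<Rightarrow> real^'n^'n \<Rightarrow> real^'n^'n \<Rightarrow> bool" where
  "has_LV E f V W \<longleftrightarrow> (\<forall>j. \<exists>l. (qV E f V W (axis j 1) \<longlongrightarrow> l) (at 0))"

definition has_LW :: "('m::finite \<Rightarrow> real^'n^'n) \<Rightarrow> (real^'n^'n \<Rightarrow> real^'n^'n \<Rightarrow> real)
                   \<Rightarrow> real^'n^'n \<Rightarrow> real^'n^'n \<Rightarrow> bool" where
  "has_LW E f V W \<longleftrightarrow> (\<forall>j. \<exists>l. (qW E f V W (axis j 1) \<longlongrightarrow> l) (at 0))"

definition diff_V :: "(real^'n^'n) set \<Rightarrow> ('m::finite \<Rightarrow> real^'n^'n)
                   \<Rightarrow> (real^'n^'n \<Rightarrow> real^'n^'n \<Rightarrow> real) \<Rightarrow> real^'n^'n \<Rightarrow> real^'n^'n \<Rightarrow> bool" where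
  "diff_V G E f V W \<longleftrightarrow> has_LV E f V W \<and>
     (\<forall>\<^sub>F p in at (V, W) within G \<times> G. has_LV E f (fst p) (snd p)) \<and>
     continuous (at (V, W) within G \<times> G) (\<lambda>p. LV E f (fst p) (snd p))"

definition diff_W :: "(real^'n^'n) set \<Rightarrow> ('m::finite \<Rightarrow> real^'n^'n)
                   \<Rightarrow> (real^'n^'n \<Rightarrow> real^'n^'n \<Rightarrow> real) \<Rightarrow> real^'n^'n \<Rightarrow> real^'n^'n \<Rightarrow> bool" where
  "diff_W G E f V W \<longleftrightarrow> has_LW E f V W \<and>
     (\<forall>\<^sub>F p in at (V, W) within G \<times> G. has_LW E f (fst p) (snd p)) \<and>
     continuous (at (V, W) within G \<times> G) (\<lambda>p. LW E f (fst p) (snd p))"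

definition dirlims_V :: "('m::finite \<Rightarrow> real^'n^'n) \<Rightarrow> (real^'n^'n \<Rightarrow> real^'n^'n \<Rightarrow> real)
                   \<Rightarrow> real^'n^'n \<Rightarrow> real^'n^'n \<Rightarrow> bool" where
  "dirlims_V E f V W \<longleftrightarrow> (\<exists>B. \<forall>\<zeta>. \<exists>l. (qV E f V W \<zeta> \<longlongrightarrow> l) (at_right 0) \<and> \<bar>l\<bar> \<le> B * norm \<zeta>)"

definition dirlims_W :: "('m::finite \<Rightarrow> real^'n^'n) \<Rightarrow> (real^'n^'n \<Rightarrow> real^'n^'n \<Rightarrow> real)
                   \<Rightarrow> real^'n^'n \<Rightarrow> real^'n^'n \<Rightarrow> bool" where
  "dirlims_W E f V W \<longleftrightarrow> (\<exists>B. \<forall>\<zeta>. \<exists>l. (qW E f V W \<zeta> \<longlongrightarrow> l) (at_right 0) \<and> \<bar>l\<bar> \<le> B * norm \<zeta>)"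

text \<open>Null subsets of G x G (Haar-null), expressed through the exponential charts
  (zeta, eta) |-> (exp(S zeta) V, exp(S eta) W) around every point of G x G.\<close>
definition null_in_G2 :: "(real^'n^'n) set \<Rightarrow> ('m::finite \<Rightarrow> real^'n^'n)
                   \<Rightarrow> ((real^'n^'n) \<times> (real^'n^'n)) set \<Rightarrow> bool" where
  "null_in_G2 G E N \<longleftrightarrow> (\<forall>V\<in>G. \<forall>W\<in>G. \<exists>e>0.
     {z :: (real^'m) \<times> (real^'m). norm z < e \<and>
        (mexp (Salg E (fst z)) ** V, mexp (Salg E (snd z)) ** W) \<in> N} \<in> null_sets lborel)"

definition EE_distance :: "(real^'n^'n) set \<Rightarrow> ('m::finite \<Rightarrow> real^'n^'n)
                   \<Rightarrow> (real^'n^'n \<Rightarrow> real^'n^'n \<Rightarrow> real) \<Rightarrow> bool" where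
  "EE_distance G E D \<longleftrightarrow>
     (\<forall>V\<in>G. \<forall>W\<in>G. D V W \<ge> 0 \<and> (D V W = 0 \<longleftrightarrow> V = W)) \<and>
     null_in_G2 G E {p \<in> G \<times> G. \<not> (diff_V G E D (fst p) (snd p) \<and> diff_W G E D (fst p) (snd p))} \<and>
     (\<exists>Dmin>0. \<forall>V\<in>G. \<forall>W\<in>G. 0 < D V W \<and> D V W < Dmin \<longrightarrow>
        diff_V G E D V W \<and> diff_W G E D V W) \<and>
     (\<forall>V\<in>G. \<forall>W\<in>G. (\<not> diff_V G E D V W \<longrightarrow> dirlims_V E D V W) \<and>
                    (\<not> diff_W G E D V W \<longrightarrow> dirlims_W E D V W))"

definition path_gen :: "(real^'n^'n) set \<Rightarrow> (real \<Rightarrow> real^'n^'n \<Rightarrow> real^'n^'n \<Rightarrow> real^'n^'n) \<Rightarrow> bool" where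
  "path_gen G \<Phi> \<longleftrightarrow>
     (\<forall>\<sigma>\<in>{0..1}. \<forall>V\<in>G. \<forall>W\<in>G. \<Phi> \<sigma> V W \<in> G \<and> (\<lambda>s. \<Phi> s V W) differentiable (at \<sigma> within {0..1})) \<and>
     (\<forall>V\<in>G. \<forall>W\<in>G. \<Phi> 0 V W = V \<and> \<Phi> 1 V W = W)"

definition chain_eq :: "(real^'n^'n) set \<Rightarrow> (real^'n^'n \<Rightarrow> real^'n^'n \<Rightarrow> real)
                   \<Rightarrow> (real \<Rightarrow> real^'n^'n \<Rightarrow> real^'n^'n \<Rightarrow> real^'n^'n) \<Rightarrow> bool" where
  "chain_eq G D \<Phi> \<longleftrightarrow> (\<forall>V\<in>G. \<forall>W\<in>G. \<forall>\<sigma>\<in>{0..1}. D V W = D V (\<Phi> \<sigma> V W) + D (\<Phi> \<sigma> V W) W)"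

definition chainable :: "(real^'n^'n) set \<Rightarrow> ('m::finite \<Rightarrow> real^'n^'n)
                   \<Rightarrow> (real^'n^'n \<Rightarrow> real^'n^'n \<Rightarrow> real) \<Rightarrow> bool" where
  "chainable G E D \<longleftrightarrow> EE_distance G E D \<and> (\<exists>\<Phi>. path_gen G \<Phi> \<and> chain_eq G D \<Phi>)"

definition locally_linear :: "(real^'n^'n) set \<Rightarrow> ('m::finite \<Rightarrow> real^'n^'n)
                   \<Rightarrow> (real^'n^'n \<Rightarrow> real^'n^'n \<Rightarrow> real) \<Rightarrow> bool" where
  "locally_linear G E D \<longleftrightarrow> EE_distance G E D \<and>
     (\<exists>\<Phi>. path_gen G \<Phi> \<and> chain_eq G D \<Phi> \<and>
        (\<forall>A\<in>G. \<forall>B\<in>G. A \<noteq> B \<longrightarrow>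
           (\<exists>L>0. ((\<lambda>\<sigma>. D A (\<Phi> \<sigma> A B) / \<sigma>) \<longlongrightarrow> L) (at_right 0))))"

definition curve :: "(real^'n^'n) set \<Rightarrow> (real \<Rightarrow> real^'n^'n) \<Rightarrow> bool" where
  "curve G Hd \<longleftrightarrow> (\<forall>s\<in>{0..1}. Hd s \<in> G \<and> Hd differentiable (at s within {0..1})) \<and>
                  inj_on Hd {0..1}"

definition Cset :: "(real \<Rightarrow> real^'n^'n) \<Rightarrow> (real^'n^'n) set" where
  "Cset Hd = Hd ` {0..1}"

definition is_minimizer :: "(real^'n^'n \<Rightarrow> real^'n^'n \<Rightarrow> real) \<Rightarrow> (real \<Rightarrow> real^'n^'n)
                   \<Rightarrow> real^'n^'n \<Rightarrow> real \<Rightarrow> bool" where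
  "is_minimizer D Hd H s \<longleftrightarrow> s \<in> {0..1} \<and> (\<forall>t\<in>{0..1}. D H (Hd s) \<le> D H (Hd t))"

definition P1 :: "(real^'n^'n \<Rightarrow> real^'n^'n \<Rightarrow> real) \<Rightarrow> (real \<Rightarrow> real^'n^'n) \<Rightarrow> (real^'n^'n) set" where
  "P1 D Hd = {H. \<not> (\<exists>!s. is_minimizer D Hd H s)}"

definition sstar :: "(real^'n^'n \<Rightarrow> real^'n^'n \<Rightarrow> real) \<Rightarrow> (real \<Rightarrow> real^'n^'n) \<Rightarrow> real^'n^'n \<Rightarrow> real" where
  "sstar D Hd H = (THE s. is_minimizer D Hd H s)"

definition P2 :: "(real^'n^'n) set \<Rightarrow> ('m::finite \<Rightarrow> real^'n^'n)
                   \<Rightarrow> (real^'n^'n \<Rightarrow> real^'n^'n \<Rightarrow> real) \<Rightarrow> (real \<Rightarrow> real^'n^'n) \<Rightarrow> (real^'n^'n) set" where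
  "P2 G E D Hd = {H. H \<notin> P1 D Hd \<union> Cset Hd \<and>
      \<not> (diff_V G E D H (Hd (sstar D Hd H)) \<and> diff_W G E D H (Hd (sstar D Hd H)))}"

definition Pset :: "(real^'n^'n) set \<Rightarrow> ('m::finite \<Rightarrow> real^'n^'n)
                   \<Rightarrow> (real^'n^'n \<Rightarrow> real^'n^'n \<Rightarrow> real) \<Rightarrow> (real \<Rightarrow> real^'n^'n) \<Rightarrow> (real^'n^'n) set" where
  "Pset G E D Hd = P1 D Hd \<union> P2 G E D Hd"

definition xiN :: "('m::finite \<Rightarrow> real^'n^'n) \<Rightarrow> (real^'n^'n \<Rightarrow> real^'n^'n \<Rightarrow> real)
                   \<Rightarrow> (real \<Rightarrow> real^'n^'n) \<Rightarrow> real^'n^'n \<Rightarrow> real^'m" where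
  "xiN E D Hd H = - LV E D H (Hd (sstar D Hd H))"

end

(*
  Suppose xi_N(H) = 0, i.e. all left derivatives of D(-, B) vanish at H, where B is the point of
  the curve closest to H. Since H is not in P, D is differentiable at (H, B), so these
  derivatives stay small near H. Points M of G near H can be written in coordinates of the
  second kind, M = exp(zeta_1 E_1) ... exp(zeta_m E_m) H with |zeta| = O(|M - H|); this uses that
  G is closed, through the Cartan-type fact that G contains no small exponentials transversal to
  its Lie algebra. The mean value theorem along each factor then gives
  D(M, B) = D(H, B) + o(|M - H|). For the path Phi(sigma) = Phi(sigma, H, B), which is
  differentiable at sigma = 0, the chain equation yields
  D(H, Phi(sigma)) = D(H, B) - D(Phi(sigma), B) = o(sigma), contradicting local linearity.
*)

theory Submission
  imports Defs
begin

lemma matrix_add_rdistrib: "((A::real^'n^'n) + B) ** C = A ** C + B ** C"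
  by (vector matrix_matrix_mult_def sum.distrib field_simps)

lemma mat_1_neq_0: "mat 1 \<noteq> (0::real^'n::finite^'n)"
proof
  assume "mat 1 = (0::real^'n^'n)"
  then have "mat 1 $ (undefined::'n) $ undefined = (0::real^'n^'n) $ undefined $ undefined" by simp
  then show False by (simp add: mat_def)
qed

text \<open>Square matrices with the operator norm form a Banach algebra, in which mexp is the
  abstract exponential exp.\<close>
typedef (overloaded) 'n sqm = "UNIV :: (real^'n::finite^'n) set" by simp
setup_lifting type_definition_sqm

instantiation sqm :: (finite) real_normed_algebra_1
begin
lift_definition zero_sqm :: "'a sqm" is "0" .
lift_definition one_sqm :: "'a sqm" is "mat 1" .
lift_definition plus_sqm :: "'a sqm \<Rightarrow> 'a sqm \<Rightarrow> 'a sqm" is "(+)" .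
lift_definition minus_sqm :: "'a sqm \<Rightarrow> 'a sqm \<Rightarrow> 'a sqm" is "(-)" .
lift_definition uminus_sqm :: "'a sqm \<Rightarrow> 'a sqm" is "uminus" .
lift_definition times_sqm :: "'a sqm \<Rightarrow> 'a sqm \<Rightarrow> 'a sqm" is "(**)" .
lift_definition scaleR_sqm :: "real \<Rightarrow> 'a sqm \<Rightarrow> 'a sqm" is "(*\<^sub>R)" .
lift_definition norm_sqm :: "'a sqm \<Rightarrow> real" is "\<lambda>A. onorm ((*v) A)" .
definition dist_sqm :: "'a sqm \<Rightarrow> 'a sqm \<Rightarrow> real" where "dist_sqm a b = norm (a - b)"
definition sgn_sqm :: "'a sqm \<Rightarrow> 'a sqm" where "sgn_sqm x = inverse (norm x) *\<^sub>R x"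
definition uniformity_sqm :: "('a sqm \<times> 'a sqm) filter" where
  "uniformity_sqm = (INF e\<in>{0 <..}. principal {(x, y). dist x y < e})"
definition open_sqm :: "'a sqm set \<Rightarrow> bool" where
  "open_sqm S = (\<forall>x\<in>S. \<forall>\<^sub>F (x', y) in uniformity. x' = x \<longrightarrow> y \<in> S)"
instance
proof
  fix a b c :: "'a sqm" and r s :: real and U :: "'a sqm set"
  show "a + b + c = a + (b + c)" "a + b = b + a" "0 + a = a" "- a + a = 0" "a - b = a + - b"
    "r *\<^sub>R (a + b) = r *\<^sub>R a + r *\<^sub>R b" "(r + s) *\<^sub>R a = r *\<^sub>R a + s *\<^sub>R a"
    "r *\<^sub>R s *\<^sub>R a = (r * s) *\<^sub>R a" "1 *\<^sub>R a = a"
    by (transfer; simp add: algebra_simps)+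
  show "a * b * c = a * (b * c)" "1 * a = a" "a * 1 = a"
    "(a + b) * c = a * c + b * c" "a * (b + c) = a * b + a * c"
    "r *\<^sub>R a * b = r *\<^sub>R (a * b)" "a * r *\<^sub>R b = r *\<^sub>R (a * b)"
    by (transfer; simp add: matrix_mul_assoc matrix_add_rdistrib matrix_add_ldistrib
          scalar_matrix_assoc matrix_scalar_ac)+
  show "(0::'a sqm) \<noteq> 1" by transfer (rule mat_1_neq_0[symmetric])
  show "dist a b = norm (a - b)" "sgn a = inverse (norm a) *\<^sub>R a"
    "(uniformity :: ('a sqm \<times> 'a sqm) filter) = (INF e\<in>{0 <..}. principal {(x, y). dist x y < e})"
    "open U = (\<forall>x\<in>U. \<forall>\<^sub>F (x', y) in uniformity. x' = x \<longrightarrow> y \<in> U)"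
    by (simp_all add: dist_sqm_def sgn_sqm_def uniformity_sqm_def open_sqm_def)
  show "norm a = 0 \<longleftrightarrow> a = 0"
    by transfer (simp add: onorm_eq_0 matrix_eq)
  show "norm (a + b) \<le> norm a + norm b"
  proof transfer
    fix A B :: "real^'a^'a"
    have "onorm ((*v) (A + B)) = onorm (\<lambda>x. A *v x + B *v x)"
      by (rule arg_cong[where f = onorm]) (simp add: fun_eq_iff matrix_vector_mult_add_rdistrib)
    also have "\<dots> \<le> onorm ((*v) A) + onorm ((*v) B)"
      by (rule onorm_triangle) auto
    finally show "onorm ((*v) (A + B)) \<le> onorm ((*v) A) + onorm ((*v) B)" .
  qed
  show "norm (r *\<^sub>R a) = \<bar>r\<bar> * norm a"
  proof transfer
    fix r and A :: "real^'a^'a"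
    have "onorm ((*v) (r *\<^sub>R A)) = onorm (\<lambda>x. r *\<^sub>R (A *v x))"
      by (rule arg_cong[where f = onorm]) (simp add: fun_eq_iff scaleR_matrix_vector_assoc)
    also have "\<dots> = \<bar>r\<bar> * onorm ((*v) A)"
      by (rule onorm_scaleR) auto
    finally show "onorm ((*v) (r *\<^sub>R A)) = \<bar>r\<bar> * onorm ((*v) A)" .
  qed
  show "norm (a * b) \<le> norm a * norm b"
  proof transfer
    fix A B :: "real^'a^'a"
    have "onorm ((*v) (A ** B)) = onorm ((*v) A \<circ> (*v) B)"
      by (simp add: o_def matrix_vector_mul_assoc)
    also have "\<dots> \<le> onorm ((*v) A) * onorm ((*v) B)"
      by (rule onorm_compose) auto
    finally show "onorm ((*v) (A ** B)) \<le> onorm ((*v) A) * onorm ((*v) B)" .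
  qed
  show "norm (1::'a sqm) = 1"
  proof transfer
    have "(*v) (mat 1 :: real^'a^'a) = (\<lambda>x. x)" by (simp add: fun_eq_iff)
    then show "onorm ((*v) (mat 1 :: real^'a^'a)) = 1" by (simp add: onorm_id)
  qed
qed
end

lemma Rep_sqm_ops:
  "Rep_sqm (x + y) = Rep_sqm x + Rep_sqm y"
  "Rep_sqm (r *\<^sub>R x) = r *\<^sub>R Rep_sqm x"
  "Rep_sqm (x * y) = Rep_sqm x ** Rep_sqm y"
  "Rep_sqm 0 = 0" "Rep_sqm 1 = mat 1"
  by (transfer, simp)+

lemma Abs_sqm_ops:
  "Abs_sqm (A + B) = Abs_sqm A + Abs_sqm B"
  "Abs_sqm (r *\<^sub>R A) = r *\<^sub>R Abs_sqm A"
  "Abs_sqm (A ** B) = Abs_sqm A * Abs_sqm B"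
  by (metis Rep_sqm_inverse Rep_sqm_ops Abs_sqm_inverse UNIV_I)+

lemma norm_Abs_sqm_le: "norm (Abs_sqm (A::real^'n::finite^'n)) \<le> norm A * CARD('n)^2"
proof -
  have "norm (Abs_sqm A) \<le> (\<Sum>i\<in>UNIV. \<Sum>j\<in>UNIV. \<bar>A $ i $ j\<bar>)"
    by (simp add: norm_sqm.abs_eq eq_onp_same_args onorm_le_matrix_component_sum)
  also have "\<dots> \<le> (\<Sum>i\<in>(UNIV::'n set). \<Sum>j\<in>(UNIV::'n set). norm A)"
    by (intro sum_mono order_trans[OF component_le_norm_cart Finite_Cartesian_Product.norm_nth_le])
  finally show ?thesis by (simp add: power2_eq_square mult_ac)
qed

lemma norm_Rep_sqm_le: "norm (Rep_sqm (x::'n::finite sqm)) \<le> norm x * CARD('n)^2"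
proof -
  have "norm (Rep_sqm x) \<le> (\<Sum>i\<in>UNIV. norm (Rep_sqm x $ i))"
    unfolding norm_vec_def by (rule L2_set_le_sum) simp
  also have "\<dots> \<le> (\<Sum>i\<in>UNIV. \<Sum>j\<in>UNIV. \<bar>Rep_sqm x $ i $ j\<bar>)"
    by (intro sum_mono norm_le_l1_cart)
  also have "\<dots> \<le> (\<Sum>i\<in>(UNIV::'n set). \<Sum>j\<in>(UNIV::'n set). norm x)"
    by (intro sum_mono) (transfer, rule matrix_component_le_onorm)
  finally show ?thesis by (simp add: power2_eq_square mult_ac)
qed

lemma bounded_linear_Rep_sqm: "bounded_linear Rep_sqm"
  by (rule bounded_linear_intro[OF _ _ norm_Rep_sqm_le]) (simp_all add: Rep_sqm_ops)

lemma bounded_linear_Abs_sqm: "bounded_linear Abs_sqm"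
  by (rule bounded_linear_intro[OF _ _ norm_Abs_sqm_le]) (simp_all add: Abs_sqm_ops)

instance sqm :: (finite) banach
proof
  fix X :: "nat \<Rightarrow> 'a sqm"
  assume "Cauchy X"
  then have "Cauchy (\<lambda>k. Rep_sqm (X k))"
    by (rule bounded_linear.Cauchy[OF bounded_linear_Rep_sqm])
  then obtain L where "(\<lambda>k. Rep_sqm (X k)) \<longlonglongrightarrow> L"
    using Cauchy_convergent_iff convergent_def by blast
  then have "(\<lambda>k. Abs_sqm (Rep_sqm (X k))) \<longlonglongrightarrow> Abs_sqm L"
    by (rule bounded_linear.tendsto[OF bounded_linear_Abs_sqm])
  then show "convergent X"
    by (auto simp: convergent_def Rep_sqm_inverse)
qed

lemma continuous_on_exp_ball:
  "continuous_on (ball 0 R) (exp :: 'a::{real_normed_algebra_1,banach} \<Rightarrow> 'a)"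
proof -
  have "uniform_limit (ball 0 R) (\<lambda>n x. \<Sum>i<n. x^i /\<^sub>R fact i) (exp :: 'a \<Rightarrow> 'a) sequentially"
    unfolding exp_def
  proof (rule Weierstrass_m_test[where M = "\<lambda>i. R^i /\<^sub>R fact i"])
    fix i and x :: 'a
    assume "x \<in> ball 0 R"
    then have "norm x ^ i \<le> R ^ i" by (intro power_mono) auto
    then show "norm (x^i /\<^sub>R fact i) \<le> R^i /\<^sub>R fact i"
      by (simp add: divide_right_mono order_trans[OF norm_power_ineq])
  qed (rule summable_exp_generic)
  then show ?thesis
    by (rule uniform_limit_theorem[rotated]) (auto intro!: always_eventually continuous_intros)
qed

lemma isCont_exp_banach: "isCont exp (x::'a::{real_normed_algebra_1,banach})"
proof -
  have "x \<in> ball 0 (norm x + 1)" by simp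
  then show ?thesis
    using continuous_on_exp_ball continuous_on_eq_continuous_at[OF open_ball] by blast
qed

lemma norm_exp_minus_one_minus_le:
  fixes h :: "'a::{real_normed_algebra_1,banach}"
  shows "norm (exp h - 1 - h) \<le> exp (norm h) - 1 - norm h"
proof -
  have term_le: "norm (h^k /\<^sub>R fact k) \<le> norm h^k /\<^sub>R fact k" for k
    by (simp add: divide_right_mono norm_power_ineq)
  have "norm (\<Sum>n. h^(n+2) /\<^sub>R fact (n+2)) \<le> (\<Sum>n. norm h^(n+2) /\<^sub>R fact (n+2))"
  proof (rule norm_suminf_le)
    show "summable (\<lambda>n. norm h^(n+2) /\<^sub>R fact (n+2))"
      by (rule summable_ignore_initial_segment[OF summable_exp_generic])
  qed (rule term_le)
  then show ?thesis
    using exp_first_two_terms[of h] exp_first_two_terms[of "norm h"] by (simp add: algebra_simps)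
qed

lemma exp_has_derivative_at_0:
  "(exp has_derivative (\<lambda>h. h)) (at (0::'a::{real_normed_algebra_1,banach}))"
  unfolding has_derivative_at
proof (intro conjI bounded_linear_ident, rule Lim_null_comparison)
  have norm_tendsto: "((\<lambda>h::'a. norm h) \<longlongrightarrow> 0) (at 0)"
    by (rule tendsto_norm_zero[OF tendsto_ident_at])
  have "norm (exp h - 1 - h) / norm h \<le> norm h" if "norm h < 1" for h :: 'a
  proof -
    have "exp (norm h) \<le> 1 + norm h + (norm h)\<^sup>2"
      using that by (intro exp_bound) auto
    then have "norm (exp h - 1 - h) \<le> (norm h)\<^sup>2"
      using norm_exp_minus_one_minus_le[of h] by linarith
    then have "norm (exp h - 1 - h) / norm h \<le> (norm h)\<^sup>2 / norm h"
      by (rule divide_right_mono) simp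
    then show ?thesis
      by (simp add: power2_eq_square split: if_splits)
  qed
  with order_tendstoD(2)[OF norm_tendsto zero_less_one]
  show "\<forall>\<^sub>F h in at 0. norm (norm (exp (0 + h) - exp 0 - h) / norm h) \<le> norm (h::'a)"
    by (auto elim: eventually_mono)
  show "((\<lambda>h::'a. norm h) \<longlongrightarrow> 0) (at 0)"
    by (rule norm_tendsto)
qed

lemma mexp_eq_exp: "mexp A = Rep_sqm (exp (Abs_sqm A))"
proof -
  have "(\<lambda>k. Rep_sqm (Abs_sqm A ^ k /\<^sub>R fact k)) sums Rep_sqm (exp (Abs_sqm A))"
    by (rule bounded_linear.sums[OF bounded_linear_Rep_sqm exp_converges])
  moreover have "Rep_sqm (Abs_sqm A ^ k) = matpow A k" for k
    by (induction k) (simp_all add: matpow_def Rep_sqm_ops Abs_sqm_inverse)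
  ultimately have "(\<lambda>k. (1 / fact k) *\<^sub>R matpow A k) sums Rep_sqm (exp (Abs_sqm A))"
    by (simp add: Rep_sqm_ops divide_inverse)
  then show ?thesis
    unfolding mexp_def by (rule sums_unique[symmetric])
qed

lemma mexp_add_commuting:
  "A ** B = B ** A \<Longrightarrow> mexp (A + B) = mexp A ** mexp (B::real^'n::finite^'n)"
  by (simp add: mexp_eq_exp Abs_sqm_ops exp_add_commuting Rep_sqm_ops[symmetric]
      flip: Abs_sqm_ops(3))

lemma mexp_zero [simp]: "mexp 0 = mat 1"
  by (simp add: mexp_eq_exp Rep_sqm_ops flip: zero_sqm.abs_eq)

lemma mexp_scaleR_add:
  "mexp (s *\<^sub>R X) ** mexp (t *\<^sub>R X) = mexp ((s + t) *\<^sub>R (X::real^'n::finite^'n))"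
  by (simp add: mexp_add_commuting[symmetric] scaleR_add_left matrix_scalar_ac
      scalar_matrix_assoc[symmetric])

lemma mexp_minus_mult: "mexp X ** mexp (- X) = mat (1::real)"
  using mexp_scaleR_add[of 1 X "-1"] by simp

lemma matrix_inv_left: "invertible A \<Longrightarrow> matrix_inv A ** A = mat 1"
  and matrix_inv_right: "invertible A \<Longrightarrow> A ** matrix_inv A = mat 1"
  using someI_ex[of "\<lambda>A'. A ** A' = mat 1 \<and> A' ** A = mat 1"]
  unfolding invertible_def matrix_inv_def by auto

lemma invertible_mexp: "invertible (mexp X)"
  using mexp_minus_mult invertible_right_inverse by blast

lemma matrix_inv_mexp: "matrix_inv (mexp X) = mexp (- X)"
proof -
  have "matrix_inv (mexp X) = matrix_inv (mexp X) ** (mexp X ** mexp (- X))"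
    by (simp add: mexp_minus_mult)
  also have "\<dots> = mexp (- X)"
    by (simp add: matrix_mul_assoc matrix_inv_left[OF invertible_mexp])
  finally show ?thesis .
qed

lemma isCont_mexp: "isCont mexp X"
proof -
  have "isCont (Rep_sqm \<circ> exp \<circ> Abs_sqm) X"
    by (intro continuous_at_compose linear_continuous_at bounded_linear_Rep_sqm
        bounded_linear_Abs_sqm isCont_exp_banach)
  then show ?thesis
    by (simp add: o_def mexp_eq_exp[abs_def])
qed

lemma mexp_has_derivative_at_0: "(mexp has_derivative (\<lambda>X. X)) (at 0)"
proof -
  have "((Rep_sqm \<circ> exp \<circ> Abs_sqm) has_derivative (Rep_sqm \<circ> (\<lambda>h. h) \<circ> Abs_sqm)) (at 0)"
    by (intro diff_chain_at bounded_linear_imp_has_derivative bounded_linear_Rep_sqm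
        bounded_linear_Abs_sqm) (simp add: exp_has_derivative_at_0 flip: zero_sqm.abs_eq)
  then show ?thesis
    by (simp add: o_def Abs_sqm_inverse mexp_eq_exp[abs_def])
qed

lemma bounded_bilinear_matrix_mult:
  "bounded_bilinear ((**) :: real^'n::finite^'n \<Rightarrow> real^'n^'n \<Rightarrow> real^'n^'n)"
  unfolding bilinear_conv_bounded_bilinear[symmetric] bilinear_def
  by (auto intro!: linearI simp: matrix_add_ldistrib matrix_add_rdistrib matrix_scalar_ac
      scalar_matrix_assoc)

interpretation matrix_mult: bounded_bilinear "(**) :: real^'n::finite^'n \<Rightarrow> real^'n^'n \<Rightarrow> real^'n^'n"
  by (rule bounded_bilinear_matrix_mult)

definition mexp_prod :: "('m \<Rightarrow> real^'n::finite^'n) \<Rightarrow> 'm list \<Rightarrow> real^'m::finite \<Rightarrow> real^'n^'n" where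
  "mexp_prod E xs \<zeta> = foldr (\<lambda>j M. mexp ((\<zeta> $ j) *\<^sub>R E j) ** M) xs (mat 1)"

lemma mexp_prod_Nil [simp]: "mexp_prod E [] \<zeta> = mat 1"
  and mexp_prod_Cons [simp]: "mexp_prod E (j # xs) \<zeta> = mexp ((\<zeta> $ j) *\<^sub>R E j) ** mexp_prod E xs \<zeta>"
  by (simp_all add: mexp_prod_def)

lemma mexp_prod_zero [simp]: "mexp_prod E xs 0 = mat 1"
  by (induction xs) simp_all

lemma mexp_prod_cong: "(\<And>j. j \<in> set xs \<Longrightarrow> \<zeta> $ j = \<zeta>' $ j) \<Longrightarrow> mexp_prod E xs \<zeta> = mexp_prod E xs \<zeta>'"
  by (induction xs) auto

lemma continuous_on_mexp_prod: "continuous_on UNIV (mexp_prod E xs)"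
proof (induction xs)
  case (Cons j xs)
  have "continuous_on UNIV (\<lambda>\<zeta>::real^_. mexp ((\<zeta> $ j) *\<^sub>R E j))"
    by (rule continuous_on_compose2[OF continuous_at_imp_continuous_on[OF ballI[OF isCont_mexp]]])
      (auto intro!: continuous_intros)
  with Cons show ?case
    by (simp add: matrix_mult.continuous_on)
qed (simp add: continuous_on_const)

lemma mexp_prod_has_derivative_at_0:
  "distinct xs \<Longrightarrow> (mexp_prod E xs has_derivative (\<lambda>\<zeta>. \<Sum>j\<in>set xs. (\<zeta> $ j) *\<^sub>R E j)) (at 0)"
proof (induction xs)
  case Nil
  show ?case
    unfolding mexp_prod_Nil by simp
next
  case (Cons j xs)
  have "bounded_linear (\<lambda>\<zeta>::real^_. (\<zeta> $ j) *\<^sub>R E j)"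
    by (rule bounded_linear_compose[OF bounded_linear_scaleR_left bounded_linear_vec_nth])
  then have lin: "((\<lambda>\<zeta>::real^_. (\<zeta> $ j) *\<^sub>R E j) has_derivative (\<lambda>\<zeta>. (\<zeta> $ j) *\<^sub>R E j)) (at 0)"
    by (rule bounded_linear_imp_has_derivative)
  have "(mexp has_derivative (\<lambda>X. X)) (at ((\<lambda>\<zeta>::real^_. (\<zeta> $ j) *\<^sub>R E j) 0))"
    using mexp_has_derivative_at_0 by simp
  from has_derivative_compose[OF lin this]
  have "((\<lambda>\<zeta>::real^_. mexp ((\<zeta> $ j) *\<^sub>R E j)) has_derivative (\<lambda>\<zeta>. (\<zeta> $ j) *\<^sub>R E j)) (at 0)" .
  from matrix_mult.FDERIV[OF this Cons.IH] Cons.prems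
  show ?case
    by (simp add: add.commute)
qed

lemma linear_Salg: "linear (Salg E)"
  by (rule linearI) (simp_all add: Salg_def scaleR_add_left sum.distrib scaleR_sum_right)

lemma bounded_linear_Salg: "bounded_linear (Salg E)"
  using linear_Salg linear_conv_bounded_linear by blast

lemma Salg_axis: "Salg E (axis j 1) = E j"
proof -
  have "(\<lambda>k. (axis j (1::real)) $ k *\<^sub>R E k) = (\<lambda>k. if k = j then E k else 0)"
    by (auto simp: axis_def)
  then show ?thesis
    unfolding Salg_def by (simp only:) simp
qed

lemma has_derivative_local_inverse:
  fixes F :: "'a::euclidean_space \<Rightarrow> 'a"
  assumes "continuous_on UNIV F" "(F has_derivative (\<lambda>h. h)) (at 0)" "r > 0"
  obtains \<rho> where "\<rho> > 0"
    "\<And>M. norm (M - F 0) < \<rho> \<Longrightarrow> \<exists>Z. M = F Z \<and> norm Z < r \<and> norm Z \<le> 2 * norm (M - F 0)"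
proof -
  obtain d where d: "d > 0" "\<And>Z. norm Z < d \<Longrightarrow> norm (F Z - F 0 - Z) \<le> 1/2 * norm Z"
    using assms(2) unfolding has_derivative_at_alt
    by (metis diff_zero half_gt_zero_iff zero_less_one)
  have "F 0 \<in> interior (F ` ball 0 (min r d))"
    by (rule sussmann_open_mapping[of UNIV F 0 "\<lambda>h. h" "\<lambda>h. h"]) (use assms d in auto)
  then obtain \<rho> where \<rho>: "\<rho> > 0" "ball (F 0) \<rho> \<subseteq> F ` ball 0 (min r d)"
    by (meson open_contains_ball open_interior interior_subset subset_trans)
  show ?thesis
  proof (rule that[OF \<rho>(1)])
    fix M
    assume "norm (M - F 0) < \<rho>"
    then obtain Z where Z: "M = F Z" "norm Z < min r d"
      using \<rho>(2) by (force simp: dist_norm norm_minus_commute)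
    then have "norm Z \<le> norm (M - F 0) + norm (F Z - F 0 - Z)"
      using norm_triangle_ineq4[of "M - F 0" "F Z - F 0 - Z"] by simp
    then have "norm Z \<le> 2 * norm (M - F 0)"
      using d(2)[of Z] Z by simp
    with Z show "\<exists>Z. M = F Z \<and> norm Z < r \<and> norm Z \<le> 2 * norm (M - F 0)"
      by auto
  qed
qed

lemma has_real_derivative_along_mexp:
  assumes "has_LV E D (mexp (t *\<^sub>R E j) ** P) B"
  shows "((\<lambda>s. D (mexp (s *\<^sub>R E j) ** P) B) has_real_derivative
           LV E D (mexp (t *\<^sub>R E j) ** P) B $ j) (at t)"
proof -
  define V where "V = mexp (t *\<^sub>R E j) ** P"
  obtain l where l: "(qV E D V B (axis j 1) \<longlongrightarrow> l) (at 0)"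
    using assms unfolding has_LV_def V_def by blast
  then have "LV E D V B $ j = l"
    unfolding LV_def by (simp add: tendsto_Lim)
  moreover have "qV E D V B (axis j 1) = (\<lambda>h. (D (mexp ((t + h) *\<^sub>R E j) ** P) B - D V B) / h)"
    by (simp add: fun_eq_iff qV_def V_def Salg_axis matrix_mul_assoc mexp_scaleR_add add.commute)
  ultimately show ?thesis
    using l unfolding DERIV_def V_def by simp
qed

lemma abs_diff_along_mexp_le:
  assumes "\<And>t. t \<in> {min 0 c..max 0 c} \<Longrightarrow>
      has_LV E D (mexp (t *\<^sub>R E j) ** P) B \<and> norm (LV E D (mexp (t *\<^sub>R E j) ** P) B) \<le> \<epsilon>"
  shows "\<bar>D (mexp (c *\<^sub>R E j) ** P) B - D P B\<bar> \<le> \<epsilon> * \<bar>c\<bar>"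
proof -
  have "norm (D (mexp (c *\<^sub>R E j) ** P) B - D (mexp (0 *\<^sub>R E j) ** P) B) \<le> \<epsilon> * norm (c - 0)"
  proof (rule field_differentiable_bound[of "{min 0 c..max 0 c}"])
    fix t
    assume t: "t \<in> {min 0 c..max 0 c}"
    show "((\<lambda>s. D (mexp (s *\<^sub>R E j) ** P) B) has_field_derivative LV E D (mexp (t *\<^sub>R E j) ** P) B $ j)
        (at t within {min 0 c..max 0 c})"
      using has_real_derivative_along_mexp assms[OF t] by (blast intro: has_field_derivative_at_within)
    show "norm (LV E D (mexp (t *\<^sub>R E j) ** P) B $ j) \<le> \<epsilon>"
      using assms[OF t] Finite_Cartesian_Product.norm_nth_le order_trans by blast
  qed auto
  then show ?thesis
    by simp
qed

text \<open>Walking from A to mexp_prod E xs \<zeta> ** A one factor at a time, every intermediate point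
  has the form mexp_prod E (drop k xs) \<zeta>' ** A with each \<zeta>' $ i between 0 and \<zeta> $ i.\<close>
lemma abs_diff_along_mexp_prod_le:
  assumes "distinct xs"
    and "\<And>\<zeta>' k. (\<And>i. \<bar>\<zeta>' $ i\<bar> \<le> \<bar>\<zeta> $ i\<bar>) \<Longrightarrow>
        has_LV E D (mexp_prod E (drop k xs) \<zeta>' ** A) B \<and>
        norm (LV E D (mexp_prod E (drop k xs) \<zeta>' ** A) B) \<le> \<epsilon>"
  shows "\<bar>D (mexp_prod E xs \<zeta> ** A) B - D A B\<bar> \<le> \<epsilon> * (\<Sum>j\<leftarrow>xs. \<bar>\<zeta> $ j\<bar>)"
  using assms
proof (induction xs)
  case Nil
  then show ?case
    by simp
next
  case (Cons x xs)
  have IH: "\<bar>D (mexp_prod E xs \<zeta> ** A) B - D A B\<bar> \<le> \<epsilon> * (\<Sum>j\<leftarrow>xs. \<bar>\<zeta> $ j\<bar>)"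
  proof (rule Cons.IH)
    fix \<zeta>' k
    assume "\<And>i. \<bar>\<zeta>' $ i\<bar> \<le> \<bar>\<zeta> $ i\<bar>"
    from Cons.prems(2)[OF this, of "Suc k"]
    show "has_LV E D (mexp_prod E (drop k xs) \<zeta>' ** A) B \<and>
        norm (LV E D (mexp_prod E (drop k xs) \<zeta>' ** A) B) \<le> \<epsilon>"
      by simp
  qed (use Cons.prems(1) in simp)
  have step: "\<bar>D (mexp ((\<zeta> $ x) *\<^sub>R E x) ** (mexp_prod E xs \<zeta> ** A)) B - D (mexp_prod E xs \<zeta> ** A) B\<bar>
      \<le> \<epsilon> * \<bar>\<zeta> $ x\<bar>"
  proof (rule abs_diff_along_mexp_le)
    fix t
    assume t: "t \<in> {min 0 (\<zeta> $ x)..max 0 (\<zeta> $ x)}"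
    define \<zeta>' where "\<zeta>' = (\<chi> i. if i = x then t else \<zeta> $ i)"
    have le: "\<bar>\<zeta>' $ i\<bar> \<le> \<bar>\<zeta> $ i\<bar>" for i
      using t by (auto simp: \<zeta>'_def)
    have "mexp_prod E xs \<zeta>' = mexp_prod E xs \<zeta>"
      using Cons.prems(1) by (intro mexp_prod_cong) (auto simp: \<zeta>'_def)
    then have eq: "mexp (t *\<^sub>R E x) ** (mexp_prod E xs \<zeta> ** A) = mexp_prod E (drop 0 (x # xs)) \<zeta>' ** A"
      by (simp add: \<zeta>'_def matrix_mul_assoc)
    show "has_LV E D (mexp (t *\<^sub>R E x) ** (mexp_prod E xs \<zeta> ** A)) B \<and>
        norm (LV E D (mexp (t *\<^sub>R E x) ** (mexp_prod E xs \<zeta> ** A)) B) \<le> \<epsilon>"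
      unfolding eq by (rule Cons.prems(2)[OF le])
  qed
  have "mexp_prod E (x # xs) \<zeta> ** A = mexp ((\<zeta> $ x) *\<^sub>R E x) ** (mexp_prod E xs \<zeta> ** A)"
    by (simp add: matrix_mul_assoc)
  with IH step show ?case
    by (simp add: algebra_simps)
qed

lemma diff_V_imp_LV_near:
  assumes "diff_V G E D A B" "B \<in> G" "e > 0"
  obtains \<delta> where "\<delta> > 0"
    "\<And>V. V \<in> G \<Longrightarrow> dist V A < \<delta> \<Longrightarrow> has_LV E D V B \<and> dist (LV E D V B) (LV E D A B) < e"
proof -
  have has_A: "has_LV E D A B"
    and "\<forall>\<^sub>F p in at (A, B) within G \<times> G. has_LV E D (fst p) (snd p)"
    and "continuous (at (A, B) within G \<times> G) (\<lambda>p. LV E D (fst p) (snd p))"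
    using assms(1) unfolding diff_V_def by auto
  then obtain d1 d2 where d: "d1 > 0" "d2 > 0"
    "\<And>p. p \<in> G \<times> G \<Longrightarrow> p \<noteq> (A, B) \<Longrightarrow> dist p (A, B) < d1 \<Longrightarrow> has_LV E D (fst p) (snd p)"
    "\<And>p. p \<in> G \<times> G \<Longrightarrow> dist p (A, B) < d2 \<Longrightarrow> dist (LV E D (fst p) (snd p)) (LV E D A B) < e"
    using assms(3) unfolding eventually_at continuous_within_eps_delta by (metis fst_conv snd_conv)
  show ?thesis
  proof (rule that[of "min d1 d2"])
    fix V
    assume "V \<in> G" "dist V A < min d1 d2"
    with d assms(2,3) has_A show "has_LV E D V B \<and> dist (LV E D V B) (LV E D A B) < e"
      by (cases "V = A") (auto simp: dist_Pair_Pair)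
  qed (use d in simp)
qed

lemma mexp_prod_drop_near:
  fixes A :: "real^'n::finite^'n"
  assumes "\<delta> > 0"
  obtains r where "r > 0" "\<And>\<zeta> k. norm \<zeta> < r \<Longrightarrow> dist (mexp_prod E (drop k xs) \<zeta> ** A) A < \<delta>"
proof -
  have near: "((\<lambda>\<zeta>. mexp_prod E ys \<zeta> ** A) \<longlongrightarrow> A) (nhds 0)" for ys
  proof -
    have "isCont (mexp_prod E ys) 0"
      using continuous_on_mexp_prod continuous_on_eq_continuous_at[OF open_UNIV] by blast
    then have "isCont (\<lambda>\<zeta>. mexp_prod E ys \<zeta> ** A) 0"
      by (rule matrix_mult.isCont[OF _ continuous_const])
    then show ?thesis
      using tendsto_at_iff_tendsto_nhds[of "\<lambda>\<zeta>. mexp_prod E ys \<zeta> ** A" 0] by (simp add: isCont_def)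
  qed
  have "\<forall>\<^sub>F \<zeta> in nhds 0. \<forall>k\<in>{..length xs}. dist (mexp_prod E (drop k xs) \<zeta> ** A) A < \<delta>"
    by (intro eventually_ball_finite[OF finite_atMost] ballI tendstoD[OF near assms])
  then obtain r where r: "r > 0"
    "\<And>\<zeta> k. dist \<zeta> 0 < r \<Longrightarrow> k \<le> length xs \<Longrightarrow> dist (mexp_prod E (drop k xs) \<zeta> ** A) A < \<delta>"
    unfolding eventually_nhds_metric by auto
  show ?thesis
  proof (rule that[OF r(1)])
    fix \<zeta> :: "real^'a" and k
    assume "norm \<zeta> < r"
    then show "dist (mexp_prod E (drop k xs) \<zeta> ** A) A < \<delta>"
      using r(2)[of \<zeta> k] assms by (cases "k \<le> length xs") simp_all
  qed
qed

lemma sum_abs_le_card_norm: "(\<Sum>j\<in>UNIV. \<bar>x $ j\<bar>) \<le> CARD('m) * norm (x :: real^'m::finite)"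
proof -
  have "(\<Sum>j\<in>UNIV. \<bar>x $ j\<bar>) \<le> (\<Sum>j\<in>(UNIV::'m set). norm x)"
    by (rule sum_mono) (rule component_le_norm_cart)
  then show ?thesis
    by simp
qed

lemma has_vector_derivative_at_right_norm_quotient:
  fixes f :: "real \<Rightarrow> 'a::real_normed_vector"
  assumes "(f has_vector_derivative v) (at_right 0)"
  shows "((\<lambda>\<sigma>. norm (f \<sigma> - f 0) / \<sigma>) \<longlongrightarrow> norm v) (at_right 0)"
proof -
  have pos: "\<forall>\<^sub>F \<sigma> in at_right 0. (0::real) < \<sigma>"
    by (rule eventually_at_right_less)
  have "((\<lambda>\<sigma>. (1 / norm (\<sigma> - 0)) *\<^sub>R (f \<sigma> - (f 0 + (\<sigma> - 0) *\<^sub>R v))) \<longlongrightarrow> 0) (at_right 0)"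
    using assms unfolding has_vector_derivative_def has_derivative_within by blast
  then have "((\<lambda>\<sigma>. (f \<sigma> - f 0) /\<^sub>R \<sigma> - v) \<longlongrightarrow> 0) (at_right 0)"
    by (rule Lim_transform_eventually)
      (use pos in \<open>auto elim!: eventually_mono simp: algebra_simps divide_inverse\<close>)
  then have "((\<lambda>\<sigma>. norm ((f \<sigma> - f 0) /\<^sub>R \<sigma>)) \<longlongrightarrow> norm v) (at_right 0)"
    by (rule tendsto_norm[OF LIM_zero_cancel])
  then show ?thesis
    by (rule Lim_transform_eventually)
      (use pos in \<open>auto elim!: eventually_mono simp: divide_inverse_commute\<close>)
qed

locale matrix_lie_group_basis =
  fixes G :: "(real^'n::finite^'n) set" and E :: "'m::finite \<Rightarrow> real^'n^'n"
  assumes matrix_lie_group: "matrix_lie_group G" and lie_basis: "lie_basis G E"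
begin

lemma G_mult: "A \<in> G \<Longrightarrow> B \<in> G \<Longrightarrow> A ** B \<in> G"
  and G_one: "mat 1 \<in> G"
  and G_matrix_inv: "A \<in> G \<Longrightarrow> matrix_inv A \<in> G"
  and G_invertible: "A \<in> G \<Longrightarrow> invertible A"
  and G_closedin: "closedin (top_of_set {A. invertible A}) G"
  using matrix_lie_group unfolding matrix_lie_group_def by blast+

lemma mexp_E_in_G: "mexp (t *\<^sub>R E j) \<in> G"
proof -
  have "E j \<in> lie_algebra G"
    using lie_basis span_base[of "E j" "range E"] unfolding lie_basis_def by auto
  then show ?thesis
    unfolding lie_algebra_def by blast
qed

lemma mexp_prod_in_G: "mexp_prod E xs \<zeta> \<in> G"
  by (induction xs) (simp_all add: G_one G_mult mexp_E_in_G)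

lemma mexp_of_int_scaleR_in_G:
  assumes "mexp Y \<in> G"
  shows "mexp (of_int k *\<^sub>R Y) \<in> G"
proof -
  have nat: "mexp (real n *\<^sub>R Y) \<in> G" for n
  proof (induction n)
    case (Suc n)
    have "mexp (real (Suc n) *\<^sub>R Y) = mexp (1 *\<^sub>R Y) ** mexp (real n *\<^sub>R Y)"
      by (simp only: mexp_scaleR_add) simp
    with Suc assms show ?case
      by (simp add: G_mult)
  qed (simp add: G_one)
  show ?thesis
  proof (cases "k \<ge> 0")
    case True
    then show ?thesis
      using nat[of "nat k"] by simp
  next
    case False
    then have "mexp (of_int k *\<^sub>R Y) = matrix_inv (mexp (real (nat (- k)) *\<^sub>R Y))"
      by (simp add: matrix_inv_mexp)
    then show ?thesis
      using G_matrix_inv[OF nat] by simp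
  qed
qed

lemma G_closed_sequentially:
  assumes "\<And>k. f k \<in> G" "f \<longlonglongrightarrow> l" "invertible l"
  shows "l \<in> G"
proof -
  obtain T where T: "closed T" "G = {A. invertible A} \<inter> T"
    using G_closedin closedin_closed by blast
  have "l \<in> T"
    using T assms(1,2) by (intro closed_sequentially[of T f l]) auto
  with T assms(3) show ?thesis
    by auto
qed

text \<open>Integer multiples of the shrinking Y k approximate every multiple of their limit direction.\<close>
lemma limit_direction_in_lie_algebra:
  assumes G: "\<And>k. mexp (Y k) \<in> G" and nz: "\<And>k. Y k \<noteq> 0" and lim0: "Y \<longlonglongrightarrow> 0"
    and dir: "(\<lambda>k. Y k /\<^sub>R norm (Y k)) \<longlonglongrightarrow> l"
  shows "l \<in> lie_algebra G"
  unfolding lie_algebra_def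
proof (intro CollectI allI)
  fix t :: real
  define a where "a k = norm (Y k)" for k
  define n where "n k = \<lfloor>t / a k\<rfloor>" for k
  have a_pos: "a k > 0" for k
    using nz by (simp add: a_def)
  have a_lim: "a \<longlonglongrightarrow> 0"
    unfolding a_def using tendsto_norm_zero[OF lim0] .
  have bound: "\<bar>of_int (n k) * a k - t\<bar> \<le> a k" for k
  proof -
    have "of_int (n k) \<le> t / a k" "t / a k < of_int (n k) + 1"
      unfolding n_def by linarith+
    then have "of_int (n k) * a k \<le> t" "t < of_int (n k) * a k + a k"
      using a_pos[of k] by (simp_all add: field_simps)
    then show ?thesis
      by simp
  qed
  have "(\<lambda>k. of_int (n k) * a k - t) \<longlonglongrightarrow> 0"
    by (rule Lim_null_comparison[OF always_eventually a_lim]) (simp add: bound)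
  then have "(\<lambda>k. (of_int (n k) * a k) *\<^sub>R (Y k /\<^sub>R a k)) \<longlonglongrightarrow> t *\<^sub>R l"
    using dir unfolding a_def by (rule tendsto_scaleR[OF LIM_zero_cancel])
  moreover have "(of_int (n k) * a k) *\<^sub>R (Y k /\<^sub>R a k) = of_int (n k) *\<^sub>R Y k" for k
    using a_pos[of k] by simp
  ultimately have "(\<lambda>k. of_int (n k) *\<^sub>R Y k) \<longlonglongrightarrow> t *\<^sub>R l"
    by (simp only:)
  then have "(\<lambda>k. mexp (of_int (n k) *\<^sub>R Y k)) \<longlonglongrightarrow> mexp (t *\<^sub>R l)"
    by (rule isCont_tendsto_compose[OF isCont_mexp])
  then show "mexp (t *\<^sub>R l) \<in> G"
    by (rule G_closed_sequentially[OF mexp_of_int_scaleR_in_G[OF G] _ invertible_mexp])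
qed

definition lie_coords :: "real^'n^'n \<Rightarrow> real^'m" where
  "lie_coords = (SOME c. linear c \<and> (\<forall>j. c (E j) = axis j 1))"

lemma linear_lie_coords: "linear lie_coords"
  and lie_coords_E: "lie_coords (E j) = axis j 1"
proof -
  have indep: "independent (range E)" and inj: "inj E"
    using lie_basis unfolding lie_basis_def by blast+
  obtain c where c: "linear c" "\<forall>x\<in>range E. c x = axis (inv E x) (1::real)"
    using linear_independent_extend[OF indep, of "\<lambda>x. axis (inv E x) 1"] by blast
  then have "c (E j) = axis j 1" for j
    using inv_f_f[OF inj] by simp
  with c(1) have "\<exists>c. linear c \<and> (\<forall>j. c (E j) = axis j (1::real))"
    by blast
  from someI_ex[OF this] show "linear lie_coords" "lie_coords (E j) = axis j 1"
    unfolding lie_coords_def[symmetric] by auto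
qed

lemma bounded_linear_lie_coords: "bounded_linear lie_coords"
  using linear_lie_coords linear_conv_bounded_linear by blast

lemma lie_coords_Salg [simp]: "lie_coords (Salg E \<zeta>) = \<zeta>"
proof -
  have "lie_coords (Salg E \<zeta>) = (\<Sum>k\<in>UNIV. (\<zeta> $ k) *\<^sub>R axis k 1)"
    unfolding Salg_def
    by (simp add: linear_sum[OF linear_lie_coords] linear_scale[OF linear_lie_coords] lie_coords_E)
  also have "\<dots> = \<zeta>"
    by (simp add: vec_eq_iff axis_def if_distrib sum.delta cong: if_cong)
  finally show ?thesis .
qed

lemma Salg_lie_coords:
  assumes "X \<in> lie_algebra G"
  shows "Salg E (lie_coords X) = X"
proof -
  have "X \<in> span (range E)" and inj: "inj E"
    using assms lie_basis unfolding lie_basis_def by auto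
  then obtain u where "X = (\<Sum>v\<in>range E. u v *\<^sub>R v)"
    unfolding span_finite[OF finite_imageI[OF finite[of UNIV]]] by blast
  also have "\<dots> = (\<Sum>k\<in>UNIV. u (E k) *\<^sub>R E k)"
    by (subst sum.reindex[OF inj, unfolded o_def]) simp
  also have "\<dots> = Salg E (\<chi> k. u (E k))"
    by (simp add: Salg_def)
  finally have X: "X = Salg E (\<chi> k. u (E k))" .
  show ?thesis
    by (subst (2) X, subst X) simp
qed

lemma small_transversal_mexp_in_G:
  "\<exists>r>0. \<forall>Y. lie_coords Y = 0 \<and> mexp Y \<in> G \<and> norm Y < r \<longrightarrow> Y = 0"
proof (rule ccontr)
  assume "\<not> ?thesis"
  then have "\<forall>r>0. \<exists>Y. lie_coords Y = 0 \<and> mexp Y \<in> G \<and> norm Y < r \<and> Y \<noteq> 0"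
    by blast
  then have "\<forall>k. \<exists>Y. lie_coords Y = 0 \<and> mexp Y \<in> G \<and> norm Y < inverse (real (Suc k)) \<and> Y \<noteq> 0"
    by simp
  then have "\<exists>Y. \<forall>k. lie_coords (Y k) = 0 \<and> mexp (Y k) \<in> G \<and>
      norm (Y k) < inverse (real (Suc k)) \<and> Y k \<noteq> 0"
    by (rule choice)
  then obtain Y where Y: "\<And>k. lie_coords (Y k) = 0" "\<And>k. mexp (Y k) \<in> G"
    "\<And>k. norm (Y k) < inverse (real (Suc k))" "\<And>k. Y k \<noteq> 0"
    by blast
  have "seq_compact (sphere (0::real^'n^'n) 1)"
    by (simp add: compact_imp_seq_compact)
  moreover have "\<forall>k. Y k /\<^sub>R norm (Y k) \<in> sphere 0 1"
    using Y(4) by simp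
  ultimately obtain l s where l: "l \<in> sphere 0 1" "strict_mono s"
    "((\<lambda>k. Y k /\<^sub>R norm (Y k)) \<circ> s) \<longlonglongrightarrow> l"
    by (rule seq_compactE)
  have "Y \<longlonglongrightarrow> 0"
    by (rule Lim_null_comparison[OF always_eventually LIMSEQ_inverse_real_of_nat])
      (use Y(3) in \<open>simp add: less_imp_le\<close>)
  then have "(Y \<circ> s) \<longlonglongrightarrow> 0"
    by (rule LIMSEQ_subseq_LIMSEQ[OF _ l(2)])
  then have l_lie: "l \<in> lie_algebra G"
    using l(3) Y(2,4) by (intro limit_direction_in_lie_algebra[of "Y \<circ> s"]) (simp_all add: o_def)
  have "(\<lambda>k. lie_coords (Y (s k) /\<^sub>R norm (Y (s k)))) \<longlonglongrightarrow> lie_coords l"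
    using l(3) by (intro bounded_linear.tendsto[OF bounded_linear_lie_coords]) (simp add: o_def)
  moreover have "lie_coords (Y k /\<^sub>R norm (Y k)) = 0" for k
    by (simp add: linear_scale[OF linear_lie_coords] Y(1))
  ultimately have "lie_coords l = 0"
    by (simp add: LIMSEQ_const_iff)
  have "l = Salg E (lie_coords l)"
    using Salg_lie_coords[OF l_lie] by simp
  also have "\<dots> = 0"
    using \<open>lie_coords l = 0\<close> linear_0[OF linear_Salg] by simp
  finally show False
    using l(1) by simp
qed

definition transversal :: "real^'n^'n \<Rightarrow> real^'n^'n" where
  "transversal Z = Z - Salg E (lie_coords Z)"

lemma bounded_linear_transversal: "bounded_linear transversal"
  unfolding transversal_def[abs_def]
  by (intro bounded_linear_sub bounded_linear_ident
      bounded_linear_compose[OF bounded_linear_Salg bounded_linear_lie_coords])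

lemma lie_coords_transversal [simp]: "lie_coords (transversal Z) = 0"
  by (simp add: transversal_def linear_diff[OF linear_lie_coords])

lemma transversal_0 [simp]: "transversal 0 = 0"
  and lie_coords_0 [simp]: "lie_coords 0 = 0"
  using linear_0[OF bounded_linear.linear[OF bounded_linear_transversal]]
    linear_0[OF linear_lie_coords] by auto

text \<open>Coordinates of the second kind, corrected by a factor transversal to the Lie algebra so that
  the map has derivative the identity at 0.\<close>
definition second_kind_map :: "'m list \<Rightarrow> real^'n^'n \<Rightarrow> real^'n^'n" where
  "second_kind_map xs Z = mexp_prod E xs (lie_coords Z) ** mexp (transversal Z)"

lemma second_kind_map_0 [simp]: "second_kind_map xs 0 = mat 1"
  by (simp add: second_kind_map_def)

lemma continuous_on_second_kind_map: "continuous_on UNIV (second_kind_map xs)"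
proof -
  have "continuous_on UNIV (\<lambda>Z. mexp_prod E xs (lie_coords Z))"
    by (rule continuous_on_compose2[OF continuous_on_mexp_prod
          linear_continuous_on[OF bounded_linear_lie_coords]]) auto
  moreover have "continuous_on UNIV (\<lambda>Z. mexp (transversal Z))"
    by (rule continuous_on_compose2[OF continuous_at_imp_continuous_on linear_continuous_on])
      (auto simp: isCont_mexp bounded_linear_transversal)
  ultimately show ?thesis
    unfolding second_kind_map_def[abs_def] by (rule matrix_mult.continuous_on)
qed

lemma second_kind_map_has_derivative_at_0:
  assumes "set xs = UNIV" "distinct xs"
  shows "(second_kind_map xs has_derivative (\<lambda>h. h)) (at 0)"
proof -
  have "(mexp_prod E xs has_derivative Salg E) (at (lie_coords 0))"
    using mexp_prod_has_derivative_at_0[OF assms(2), of E] by (simp add: assms(1) Salg_def[abs_def])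
  from has_derivative_compose[OF bounded_linear_imp_has_derivative[OF bounded_linear_lie_coords] this]
  have d1: "((\<lambda>Z. mexp_prod E xs (lie_coords Z)) has_derivative (\<lambda>Z. Salg E (lie_coords Z))) (at 0)" .
  have "(mexp has_derivative (\<lambda>X. X)) (at (transversal 0))"
    using mexp_has_derivative_at_0 by simp
  from has_derivative_compose[OF bounded_linear_imp_has_derivative[OF bounded_linear_transversal] this]
  have d2: "((\<lambda>Z. mexp (transversal Z)) has_derivative transversal) (at 0)"
    by simp
  show ?thesis
    unfolding second_kind_map_def[abs_def]
    by (rule matrix_mult.FDERIV[OF d1 d2, THEN has_derivative_eq_rhs])
      (simp add: transversal_def linear_0[OF linear_Salg])
qed

text \<open>By small_transversal_mexp_in_G, the transversal factor of a point of G near the identity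
  vanishes.\<close>
lemma mexp_prod_chart:
  assumes xs: "set xs = UNIV" "distinct xs"
  obtains \<rho> C where "\<rho> > 0" "C > 0"
    "\<And>M. M \<in> G \<Longrightarrow> norm (M - mat 1) < \<rho> \<Longrightarrow>
       \<exists>\<zeta>. M = mexp_prod E xs \<zeta> \<and> norm \<zeta> \<le> C * norm (M - mat 1)"
proof -
  obtain r where r: "r > 0" "\<And>Y. lie_coords Y = 0 \<Longrightarrow> mexp Y \<in> G \<Longrightarrow> norm Y < r \<Longrightarrow> Y = 0"
    using small_transversal_mexp_in_G by blast
  obtain KT where KT: "KT > 0" "\<And>Z. norm (transversal Z) \<le> norm Z * KT"
    using bounded_linear.pos_bounded[OF bounded_linear_transversal] by blast
  obtain Kc where Kc: "Kc > 0" "\<And>Z. norm (lie_coords Z) \<le> norm Z * Kc"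
    using bounded_linear.pos_bounded[OF bounded_linear_lie_coords] by blast
  obtain \<rho> where \<rho>: "\<rho> > 0" "\<And>M. norm (M - mat 1) < \<rho> \<Longrightarrow>
      \<exists>Z. M = second_kind_map xs Z \<and> norm Z < r / KT \<and> norm Z \<le> 2 * norm (M - mat 1)"
    using has_derivative_local_inverse[OF continuous_on_second_kind_map
        second_kind_map_has_derivative_at_0[OF xs], of "r / KT"] r KT
    by auto
  show ?thesis
  proof (rule that[OF \<rho>(1), of "2 * Kc"])
    fix M
    assume M: "M \<in> G" "norm (M - mat 1) < \<rho>"
    then obtain Z where Z: "M = second_kind_map xs Z" "norm Z < r / KT" "norm Z \<le> 2 * norm (M - mat 1)"
      using \<rho>(2) by blast
    have Q_G: "mexp_prod E xs (lie_coords Z) \<in> G"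
      by (rule mexp_prod_in_G)
    have "mexp (transversal Z) = matrix_inv (mexp_prod E xs (lie_coords Z)) ** M"
      using Z(1) by (simp add: second_kind_map_def matrix_mul_assoc
          matrix_inv_left[OF G_invertible[OF Q_G]])
    then have "mexp (transversal Z) \<in> G"
      using G_mult G_matrix_inv Q_G M(1) by simp
    moreover have "norm (transversal Z) < r"
      using KT Z(2) order_le_less_trans[OF KT(2)[of Z]] by (simp add: field_simps)
    ultimately have "transversal Z = 0"
      using r(2) by simp
    then have "M = mexp_prod E xs (lie_coords Z)"
      using Z(1) by (simp add: second_kind_map_def)
    moreover have "norm (lie_coords Z) \<le> 2 * Kc * norm (M - mat 1)"
      using order_trans[OF Kc(2)[of Z] mult_right_mono[OF Z(3)]] Kc(1) by (simp add: mult_ac)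
    ultimately show "\<exists>\<zeta>. M = mexp_prod E xs \<zeta> \<and> norm \<zeta> \<le> 2 * Kc * norm (M - mat 1)"
      by blast
  qed (use Kc in simp)
qed

lemma mexp_prod_chart_at:
  assumes xs: "set xs = UNIV" "distinct xs" and A: "A \<in> G"
  obtains \<delta> C where "\<delta> > 0" "C > 0"
    "\<And>M. M \<in> G \<Longrightarrow> norm (M - A) < \<delta> \<Longrightarrow>
       \<exists>\<zeta>. M = mexp_prod E xs \<zeta> ** A \<and> norm \<zeta> \<le> C * norm (M - A)"
proof -
  obtain \<rho> C where \<rho>: "\<rho> > 0" "C > 0" and chart: "\<And>N. N \<in> G \<Longrightarrow> norm (N - mat 1) < \<rho> \<Longrightarrow>
      \<exists>\<zeta>. N = mexp_prod E xs \<zeta> \<and> norm \<zeta> \<le> C * norm (N - mat 1)"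
    using mexp_prod_chart[OF xs] by blast
  define Ai where "Ai = matrix_inv A"
  have Ai: "Ai \<in> G" "A ** Ai = mat 1" "Ai ** A = mat 1"
    unfolding Ai_def using G_matrix_inv[OF A] matrix_inv_left matrix_inv_right G_invertible[OF A]
    by auto
  obtain K where K: "K > 0" "\<And>X :: real^'n^'n. norm (X ** Ai) \<le> norm X * K"
    using bounded_linear.pos_bounded[OF matrix_mult.bounded_linear_left[where b = Ai]] by blast
  show ?thesis
  proof (rule that[of "\<rho> / K" "C * K"])
    fix M
    assume M: "M \<in> G" "norm (M - A) < \<rho> / K"
    have MAi: "norm (M ** Ai - mat 1) \<le> norm (M - A) * K"
      using K(2)[of "M - A"] by (simp add: matrix_mult.diff_left Ai)
    also have "\<dots> < \<rho>"
      using M(2) K(1) by (simp add: field_simps)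
    finally obtain \<zeta> where \<zeta>: "M ** Ai = mexp_prod E xs \<zeta>" "norm \<zeta> \<le> C * norm (M ** Ai - mat 1)"
      using chart G_mult[OF M(1) Ai(1)] by blast
    have "M = M ** (Ai ** A)"
      by (simp add: Ai(3))
    also have "\<dots> = mexp_prod E xs \<zeta> ** A"
      by (simp add: matrix_mul_assoc \<zeta>(1))
    finally have "M = mexp_prod E xs \<zeta> ** A" .
    moreover have "norm \<zeta> \<le> C * K * norm (M - A)"
      using order_trans[OF \<zeta>(2) mult_left_mono[OF MAi]] \<rho>(2) by (simp add: mult_ac)
    ultimately show "\<exists>\<zeta>. M = mexp_prod E xs \<zeta> ** A \<and> norm \<zeta> \<le> C * K * norm (M - A)"
      by blast
  qed (use \<rho> K in simp_all)
qed

lemma diff_V_imp_LV_near_mexp_prod: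
  assumes A: "A \<in> G" and B: "B \<in> G" and dV: "diff_V G E D A B" and "e > 0"
  obtains r where "r > 0" "\<And>\<zeta> k. norm \<zeta> < r \<Longrightarrow>
      has_LV E D (mexp_prod E (drop k xs) \<zeta> ** A) B \<and>
      dist (LV E D (mexp_prod E (drop k xs) \<zeta> ** A) B) (LV E D A B) < e"
proof -
  obtain \<delta> where \<delta>: "\<delta> > 0"
    "\<And>V. V \<in> G \<Longrightarrow> dist V A < \<delta> \<Longrightarrow> has_LV E D V B \<and> dist (LV E D V B) (LV E D A B) < e"
    using diff_V_imp_LV_near[OF dV B \<open>e > 0\<close>] by blast
  obtain r where "r > 0" "\<And>\<zeta> k. norm \<zeta> < r \<Longrightarrow> dist (mexp_prod E (drop k xs) \<zeta> ** A) A < \<delta>"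
    using mexp_prod_drop_near[OF \<delta>(1)] by blast
  with \<delta>(2) G_mult[OF mexp_prod_in_G A] show ?thesis
    using that by blast
qed

lemma LV_zero_imp_increment_small:
  assumes A: "A \<in> G" and B: "B \<in> G" and dV: "diff_V G E D A B" and LV_A: "LV E D A B = 0"
    and "\<epsilon> > 0"
  obtains \<delta> where "\<delta> > 0"
    "\<And>M. M \<in> G \<Longrightarrow> norm (M - A) < \<delta> \<Longrightarrow> \<bar>D M B - D A B\<bar> \<le> \<epsilon> * norm (M - A)"
proof -
  obtain xs :: "'m list" where xs: "set xs = UNIV" "distinct xs"
    using finite_distinct_list[OF finite[of "UNIV :: 'm set"]] by blast
  obtain \<delta>0 C where \<delta>0: "\<delta>0 > 0" "C > 0" and chart: "\<And>M. M \<in> G \<Longrightarrow> norm (M - A) < \<delta>0 \<Longrightarrow>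
      \<exists>\<zeta>. M = mexp_prod E xs \<zeta> ** A \<and> norm \<zeta> \<le> C * norm (M - A)"
    using mexp_prod_chart_at[OF xs A] by blast
  define \<epsilon>' where "\<epsilon>' = \<epsilon> / (CARD('m) * C)"
  have \<epsilon>': "\<epsilon>' > 0"
    unfolding \<epsilon>'_def using \<open>\<epsilon> > 0\<close> \<delta>0(2) by simp
  obtain r where r: "r > 0" "\<And>\<zeta> k. norm \<zeta> < r \<Longrightarrow>
      has_LV E D (mexp_prod E (drop k xs) \<zeta> ** A) B \<and>
      norm (LV E D (mexp_prod E (drop k xs) \<zeta> ** A) B) < \<epsilon>'"
    using diff_V_imp_LV_near_mexp_prod[OF A B dV \<epsilon>', of xs] by (auto simp: LV_A dist_norm)
  show ?thesis
  proof (rule that[of "min \<delta>0 (r / C)"])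
    fix M
    assume M: "M \<in> G" "norm (M - A) < min \<delta>0 (r / C)"
    then obtain \<zeta> where M_eq: "M = mexp_prod E xs \<zeta> ** A" and \<zeta>_le: "norm \<zeta> \<le> C * norm (M - A)"
      using chart by auto
    have "C * norm (M - A) < r"
      using M(2) \<delta>0(2) by (simp add: field_simps)
    with \<zeta>_le have \<zeta>_r: "norm \<zeta> < r"
      by linarith
    have "\<bar>D M B - D A B\<bar> \<le> \<epsilon>' * (\<Sum>j\<leftarrow>xs. \<bar>\<zeta> $ j\<bar>)"
      unfolding M_eq
    proof (rule abs_diff_along_mexp_prod_le[OF xs(2)])
      fix \<zeta>' :: "real^'m" and k
      assume "\<And>i. \<bar>\<zeta>' $ i\<bar> \<le> \<bar>\<zeta> $ i\<bar>"
      then have "norm \<zeta>' < r"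
        using norm_le_componentwise_cart[of \<zeta>' \<zeta>] \<zeta>_r by simp
      then show "has_LV E D (mexp_prod E (drop k xs) \<zeta>' ** A) B \<and>
          norm (LV E D (mexp_prod E (drop k xs) \<zeta>' ** A) B) \<le> \<epsilon>'"
        using r(2) less_imp_le by blast
    qed
    also have "\<dots> \<le> \<epsilon>' * (CARD('m) * norm \<zeta>)"
      using sum_abs_le_card_norm[of \<zeta>] xs \<epsilon>'
      by (simp add: sum_list_distinct_conv_sum_set mult_left_mono)
    also have "\<dots> \<le> \<epsilon>' * (CARD('m) * (C * norm (M - A)))"
      using \<zeta>_le \<epsilon>' by (simp add: mult_left_mono)
    also have "\<dots> = \<epsilon> * norm (M - A)"
      using \<delta>0(2) by (simp add: \<epsilon>'_def)
    finally show "\<bar>D M B - D A B\<bar> \<le> \<epsilon> * norm (M - A)" .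
  qed (use \<delta>0 r(1) in simp)
qed

lemma LV_zero_imp_path_rate_le:
  assumes A: "A \<in> G" and B: "B \<in> G" and dV: "diff_V G E D A B" and LV_A: "LV E D A B = 0"
    and \<Phi>: "path_gen G \<Phi>" and chain: "chain_eq G D \<Phi>"
    and v: "((\<lambda>\<sigma>. \<Phi> \<sigma> A B) has_vector_derivative v) (at_right 0)"
    and L: "((\<lambda>\<sigma>. D A (\<Phi> \<sigma> A B) / \<sigma>) \<longlongrightarrow> L) (at_right 0)"
    and "\<epsilon> > 0"
  shows "L \<le> \<epsilon> * norm v"
proof -
  have \<Phi>_0: "\<Phi> 0 A B = A" and \<Phi>_G: "\<And>\<sigma>. \<sigma> \<in> {0..1} \<Longrightarrow> \<Phi> \<sigma> A B \<in> G"
    using \<Phi> A B unfolding path_gen_def by auto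
  obtain \<delta> where \<delta>: "\<delta> > 0"
    "\<And>M. M \<in> G \<Longrightarrow> norm (M - A) < \<delta> \<Longrightarrow> \<bar>D M B - D A B\<bar> \<le> \<epsilon> * norm (M - A)"
    using LV_zero_imp_increment_small[OF A B dV LV_A \<open>\<epsilon> > 0\<close>] by blast
  have "((\<lambda>\<sigma>. \<Phi> \<sigma> A B) \<longlongrightarrow> A) (at_right 0)"
    using has_vector_derivative_continuous[OF v] \<Phi>_0 by (simp add: continuous_within)
  from tendstoD[OF this \<delta>(1)]
  have "\<forall>\<^sub>F \<sigma> in at_right 0. norm (\<Phi> \<sigma> A B - A) < \<delta>"
    by (simp add: dist_norm)
  moreover have "\<forall>\<^sub>F \<sigma> in at_right 0. (0::real) < \<sigma>"
    by (rule eventually_at_right_less)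
  moreover have "\<forall>\<^sub>F \<sigma> in at_right 0. \<sigma> < (1::real)"
    by (rule order_tendstoD(2)[OF tendsto_ident_at zero_less_one])
  ultimately have "\<forall>\<^sub>F \<sigma> in at_right 0. D A (\<Phi> \<sigma> A B) / \<sigma> \<le> \<epsilon> * (norm (\<Phi> \<sigma> A B - A) / \<sigma>)"
  proof eventually_elim
    case (elim \<sigma>)
    then have \<sigma>: "\<sigma> \<in> {0..1}"
      by simp
    have "D A B = D A (\<Phi> \<sigma> A B) + D (\<Phi> \<sigma> A B) B"
      using chain A B \<sigma> unfolding chain_eq_def by blast
    then have "D A (\<Phi> \<sigma> A B) = D A B - D (\<Phi> \<sigma> A B) B"
      by simp
    also have "\<dots> \<le> \<epsilon> * norm (\<Phi> \<sigma> A B - A)"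
      using \<delta>(2)[OF \<Phi>_G[OF \<sigma>]] elim by linarith
    finally show ?case
      using elim by (simp add: divide_right_mono)
  qed
  moreover have "((\<lambda>\<sigma>. norm (\<Phi> \<sigma> A B - A) / \<sigma>) \<longlongrightarrow> norm v) (at_right 0)"
    using has_vector_derivative_at_right_norm_quotient[OF v] \<Phi>_0 by simp
  ultimately show "L \<le> \<epsilon> * norm v"
    using L by (intro tendsto_le[OF trivial_limit_at_right_real tendsto_mult_left])
qed

lemma LV_zero_imp_path_rate_nonpos:
  assumes A: "A \<in> G" and B: "B \<in> G" and dV: "diff_V G E D A B" and LV_A: "LV E D A B = 0"
    and \<Phi>: "path_gen G \<Phi>" and chain: "chain_eq G D \<Phi>"
    and L: "((\<lambda>\<sigma>. D A (\<Phi> \<sigma> A B) / \<sigma>) \<longlongrightarrow> L) (at_right 0)"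
  shows "L \<le> 0"
proof -
  have "(\<lambda>\<sigma>. \<Phi> \<sigma> A B) differentiable (at 0 within {0..1})"
    using \<Phi> A B unfolding path_gen_def by auto
  then have "(\<lambda>\<sigma>. \<Phi> \<sigma> A B) differentiable (at_right 0)"
    by (simp add: at_within_Icc_at_right)
  then obtain v where v: "((\<lambda>\<sigma>. \<Phi> \<sigma> A B) has_vector_derivative v) (at_right 0)"
    using vector_derivative_works by blast
  have v_pos: "norm v + 1 > 0"
    by (simp add: add_nonneg_pos)
  show "L \<le> 0"
  proof (rule field_le_epsilon)
    fix e :: real
    assume "e > 0"
    with v_pos have "L \<le> e / (norm v + 1) * norm v"
      by (intro LV_zero_imp_path_rate_le[OF A B dV LV_A \<Phi> chain v L]) simp
    also have "\<dots> \<le> e / (norm v + 1) * (norm v + 1)"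
      using \<open>e > 0\<close> v_pos by (intro mult_left_mono) simp_all
    also have "\<dots> = e"
      using v_pos by simp
    finally show "L \<le> 0 + e"
      by simp
  qed
qed

end

theorem lemma6:
  fixes G :: "(real^'n^'n) set"
    and E :: "'m::finite \<Rightarrow> real^'n^'n"
    and Dh :: "real^'n^'n \<Rightarrow> real^'n^'n \<Rightarrow> real"
    and Hd :: "real \<Rightarrow> real^'n^'n"
    and H :: "real^'n^'n"
  assumes "matrix_lie_group G"
    and "connected G"
    and "lie_basis G E"
    and "chainable G E Dh"
    and "locally_linear G E Dh"
    and "curve G Hd"
    and "H \<in> G"
    and "H \<notin> Cset Hd \<union> Pset G E Dh Hd"
  shows "xiN E Dh Hd H \<noteq> 0"
proof
  assume xi: "xiN E Dh Hd H = 0"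
  interpret matrix_lie_group_basis G E
    using assms(1,3) by unfold_locales
  define B where "B = Hd (sstar Dh Hd H)"
  have "\<exists>!s. is_minimizer Dh Hd H s"
    using assms(8) by (simp add: Pset_def P1_def)
  then have "is_minimizer Dh Hd H (sstar Dh Hd H)"
    unfolding sstar_def by (rule theI')
  then have B: "B \<in> G" and "H \<noteq> B"
    using assms(6,8) unfolding is_minimizer_def curve_def Cset_def B_def by auto
  have "diff_V G E Dh H B"
    using assms(8) unfolding Pset_def P2_def B_def by auto
  moreover have "LV E Dh H B = 0"
    using xi unfolding xiN_def B_def by simp
  moreover obtain \<Phi> L where "path_gen G \<Phi>" "chain_eq G Dh \<Phi>" "L > 0"
    "((\<lambda>\<sigma>. Dh H (\<Phi> \<sigma> H B) / \<sigma>) \<longlongrightarrow> L) (at_right 0)"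
    using assms(5) \<open>H \<in> G\<close> B \<open>H \<noteq> B\<close> unfolding locally_linear_def by blast
  ultimately have "L \<le> 0"
    by (intro LV_zero_imp_path_rate_nonpos[OF \<open>H \<in> G\<close> B])
  with \<open>L > 0\<close> show False
    by simp
qed

end
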